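(* Let $X$ be a locally convex Hausdorff space, $K\subset X$ a convex compact subset, $T:\mathscr{C}(K)\to\mathscr{C}(K)$ a Markov operator such that $T(h)=h$ for every $h\in A(K)$, $a\ge0$, and $(\mu_n)_{n\ge1}$ Borel probability measures on $K$. Suppose that ($c_1$) $T$ maps continuous convex functions into convex functions, and ($c_2$) $\Delta(f;x,y)\ge0$ for every convex $f\in\mathscr{C}(K)$ and every $x,y\in K$. Then each $C_n$ maps continuous convex functions into (continuous) convex functions.
   Context: $A(K)$ is the space of continuous affine functions on $K$. A Markov operator is a positive linear operator $T$ on $\mathscr{C}(K)$ with $T(\mathbf{1})=\mathbf{1}$; $(\tilde\mu_x^T)_{x\in K}$ are the Borel probability measures with $\int_Kf\,d\tilde\mu_x^T=T(f)(x)$. $C_n(f)(x)=\int_K\cdots\int_K f\big(\frac{x_1+\dots+x_n+a x_{n+1}}{n+a}\big)\,d\tilde\mu_x^T(x_1)\cdots d\tilde\mu_x^T(x_n)\,d\mu_n(x_{n+1})$. For $f\in\mathscr{C}(K)$ and $x,y\in K$, $$\Delta(f;x,y)=\iint_{K^2}f\big(\tfrac{s+t}{2}\big)d\tilde\mu_x^T(s)d\tilde\mu_x^T(t)+\iint_{K^2}f\big(\tfrac{s+t}{2}\big)d\tilde\mu_y^T(s)d\tilde\mu_y^T(t)-2\iint_{K^2}f\big(\tfrac{s+t}{2}\big)d\tilde\mu_x^T(s)d\tilde\mu_y^T(t).$$ *)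

theory Defs
  imports "HOL-Analysis.Analysis" "HOL-Probability.Probability"
begin

definition lc_hausdorff_tvs :: "'a::{real_vector,t2_space} itself \<Rightarrow> bool" where
  "lc_hausdorff_tvs _ \<longleftrightarrow>
     continuous_on UNIV (\<lambda>p::'a \<times> 'a. fst p + snd p) \<and>
     continuous_on UNIV (\<lambda>p::real \<times> 'a. fst p *\<^sub>R snd p) \<and>
     (\<forall>U (x::'a). open U \<and> x \<in> U \<longrightarrow> (\<exists>V. open V \<and> convex V \<and> x \<in> V \<and> V \<subseteq> U))"

definition borel_prob_on :: "'a::topological_space set \<Rightarrow> 'a measure \<Rightarrow> bool" where
  "borel_prob_on K M \<longleftrightarrow> prob_space M \<and> space M = K \<and> sets M = sets (restrict_space borel K)"

definition affine_fun_on :: "'a::real_vector set \<Rightarrow> ('a \<Rightarrow> real) \<Rightarrow> bool" where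
  "affine_fun_on K h \<longleftrightarrow> (\<forall>x\<in>K. \<forall>y\<in>K. \<forall>t::real. 0 \<le> t \<and> t \<le> 1 \<longrightarrow>
      h ((1 - t) *\<^sub>R x + t *\<^sub>R y) = (1 - t) * h x + t * h y)"

definition A_K :: "'a::{real_vector,topological_space} set \<Rightarrow> ('a \<Rightarrow> real) set" where
  "A_K K = {h. continuous_on K h \<and> affine_fun_on K h}"

definition markov_op :: "'a::topological_space set \<Rightarrow> (('a \<Rightarrow> real) \<Rightarrow> ('a \<Rightarrow> real)) \<Rightarrow> bool" where
  "markov_op K T \<longleftrightarrow>
     (\<forall>f. continuous_on K f \<longrightarrow> continuous_on K (T f)) \<and>
     (\<forall>f g (c::real) (d::real). continuous_on K f \<and> continuous_on K g \<longrightarrow>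
        (\<forall>x\<in>K. T (\<lambda>y. c * f y + d * g y) x = c * T f x + d * T g x)) \<and>
     (\<forall>f. continuous_on K f \<and> (\<forall>x\<in>K. 0 \<le> f x) \<longrightarrow> (\<forall>x\<in>K. 0 \<le> T f x)) \<and>
     (\<forall>x\<in>K. T (\<lambda>_. 1) x = 1)"

text \<open>iter_int k M g = \<integral>...\<integral> g(x_1+...+x_k) dM(x_1)...dM(x_k)
  (x_1 innermost).\<close>
fun iter_int :: "nat \<Rightarrow> 'a::real_vector measure \<Rightarrow> ('a \<Rightarrow> real) \<Rightarrow> real" where
  "iter_int 0 M g = g 0"
| "iter_int (Suc k) M g = (\<integral>s. iter_int k M (\<lambda>z. g (z + s)) \<partial>M)"

text \<open>The operator C_n, with mu x = \<mu>_x^T and mus n = \<mu>_n.\<close>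
definition C_op :: "('a \<Rightarrow> 'a::real_vector measure) \<Rightarrow> (nat \<Rightarrow> 'a measure) \<Rightarrow> real \<Rightarrow> nat
                    \<Rightarrow> ('a \<Rightarrow> real) \<Rightarrow> 'a \<Rightarrow> real" where
  "C_op mu mus a n f x =
     (\<integral>y. iter_int n (mu x) (\<lambda>S. f ((1 / (real n + a)) *\<^sub>R (S + a *\<^sub>R y))) \<partial>(mus n))"

definition mid_int :: "'a::real_vector measure \<Rightarrow> 'a measure \<Rightarrow> ('a \<Rightarrow> real) \<Rightarrow> real" where
  "mid_int M N f = (\<integral>t. (\<integral>s. f ((1/2) *\<^sub>R (s + t)) \<partial>M) \<partial>N)"

definition Delta :: "('a \<Rightarrow> 'a::real_vector measure) \<Rightarrow> ('a \<Rightarrow> real) \<Rightarrow> 'a \<Rightarrow> 'a \<Rightarrow> real" where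
  "Delta mu f x y = mid_int (mu x) (mu x) f + mid_int (mu y) (mu y) f - 2 * mid_int (mu x) (mu y) f"

end

theory Submission
  imports Defs
begin

text \<open>For fixed y, the integrand of C_n f is x \<mapsto> \<integral>...\<integral> g(x_1 + ... + x_n) d\<mu>_x ... d\<mu>_x
  with g convex, i.e. the diagonal of H(p_1, ..., p_n) = \<integral>...\<integral> g(x_1 + ... + x_n) d\<mu>_p_1 ... d\<mu>_p_n.
  By Fubini H is symmetric; by (c1) it is convex in each variable; and (c2), applied to
  v \<mapsto> \<integral>...\<integral> g(2v + x_3 + ... + x_n), gives 2 H(x,y,...) \<le> H(x,x,...) + H(y,y,...).
  Hence k \<mapsto> H(y^k, x^(n-k)) is discretely convex and lies below its chord, and replacing the
  entries one at a time by (1-t)x + ty, using separate convexity, gives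
  H(((1-t)x + ty)^n) \<le> (1-t) H(x^n) + t H(y^n).\<close>

section \<open>Integration of continuous functions on a compact set\<close>

lemma Hausdorff_space_euclidean_t2: "Hausdorff_space (euclidean :: 'a::t2_space topology)"
  unfolding Hausdorff_space_def using hausdorff by (fastforce simp: disjnt_def)

lemma compact_separating_function:
  fixes K :: "'a::t2_space set"
  assumes "compact K" "s \<in> K" "s' \<in> K" "s \<noteq> s'"
  obtains h :: "'a \<Rightarrow> real" where "continuous_on K h" "h s \<noteq> h s'"
proof -
  have "normal_space (top_of_set K)"
    by (rule compact_Hausdorff_or_regular_imp_normal_space)
       (simp_all add: compact_space_subtopology assms
          Hausdorff_space_subtopology[OF Hausdorff_space_euclidean_t2])
  then obtain f where f: "continuous_map (top_of_set K) (top_of_set {0..1::real}) f"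
      "f ` {s} \<subseteq> {0}" "f ` {s'} \<subseteq> {1}"
    by (rule Urysohn_lemma[of _ "{s}" "{s'}" 0 1])
       (use assms in \<open>auto simp: closedin_singleton disjnt_def\<close>)
  then show ?thesis
    using that[of f] by (auto simp: continuous_map_subtopology_eu)
qed

lemma borel_prob_on_integrable_continuous:
  fixes h :: "'a::topological_space \<Rightarrow> real"
  assumes "compact K" "borel_prob_on K M" "continuous_on K h"
  shows "integrable M h"
proof -
  interpret prob_space M
    using assms by (auto simp: borel_prob_on_def)
  have meas: "h \<in> borel_measurable M"
    using borel_measurable_continuous_on_restrict[OF assms(3)] assms(2)
    by (auto simp: borel_prob_on_def cong: measurable_cong_sets)
  obtain B where B: "\<forall>x\<in>K. norm (h x) \<le> B"
    using compact_imp_bounded[OF compact_continuous_image[OF assms(3,1)]]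
    by (auto simp: bounded_iff)
  show ?thesis
    by (rule integrable_const_bound[where B=B]) (use B meas assms(2) in \<open>auto simp: borel_prob_on_def\<close>)
qed

lemma borel_prob_on_abs_integral_le:
  fixes h :: "'a::topological_space \<Rightarrow> real"
  assumes "borel_prob_on K M" "integrable M h" "\<And>s. s \<in> K \<Longrightarrow> \<bar>h s\<bar> \<le> e"
  shows "\<bar>\<integral>s. h s \<partial>M\<bar> \<le> e"
proof -
  interpret prob_space M
    using assms by (auto simp: borel_prob_on_def)
  have "\<bar>\<integral>s. h s \<partial>M\<bar> \<le> (\<integral>s. \<bar>h s\<bar> \<partial>M)"
    by (rule integral_abs_bound)
  also have "\<dots> \<le> (\<integral>s. e \<partial>M)"
    by (rule integral_mono) (use assms in \<open>auto simp: borel_prob_on_def\<close>)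
  also have "\<dots> = e"
    by (simp add: prob_space)
  finally show ?thesis .
qed

lemma continuous_on_integral_parametric:
  fixes \<phi> :: "'b::topological_space \<times> 'a::t2_space \<Rightarrow> real"
  assumes K: "compact K" and \<phi>: "continuous_on (Q \<times> K) \<phi>"
    and \<nu>: "\<And>q. q \<in> Q \<Longrightarrow> borel_prob_on K (\<nu> q)"
    and \<nu>_continuous: "\<And>h::'a \<Rightarrow> real. continuous_on K h \<Longrightarrow> continuous_on Q (\<lambda>q. \<integral>s. h s \<partial>\<nu> q)"
  shows "continuous_on Q (\<lambda>q. \<integral>s. \<phi> (q, s) \<partial>\<nu> q)"
  unfolding continuous_on_def
proof (intro ballI)
  fix q0 assume q0: "q0 \<in> Q"
  have \<phi>_slice: "continuous_on K (\<lambda>s. \<phi> (q, s))" if "q \<in> Q" for q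
    by (rule continuous_on_compose2[OF \<phi>]) (auto intro!: continuous_intros simp: that)
  show "((\<lambda>q. \<integral>s. \<phi> (q, s) \<partial>\<nu> q) \<longlongrightarrow> (\<integral>s. \<phi> (q0, s) \<partial>\<nu> q0)) (at q0 within Q)"
    unfolding tendsto_iff
  proof (intro allI impI)
    fix e :: real assume e: "e > 0"
    obtain X0 where X0: "q0 \<in> X0" "open X0"
      "\<forall>x\<in>X0 \<inter> Q. \<forall>t\<in>K. dist (\<phi> (x, t)) (\<phi> (q0, t)) \<le> e/3"
      using continuous_on_prod_compactE[OF \<phi> K q0, of "e/3"] e by auto
    have near: "\<forall>\<^sub>F q in at q0 within Q. q \<in> X0 \<and> q \<in> Q"
      unfolding eventually_at_topological using X0 by blast
    have "((\<lambda>q. \<integral>s. \<phi> (q0, s) \<partial>\<nu> q) \<longlongrightarrow> (\<integral>s. \<phi> (q0, s) \<partial>\<nu> q0)) (at q0 within Q)"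
      using \<nu>_continuous[OF \<phi>_slice[OF q0]] q0 unfolding continuous_on_def by blast
    then have close: "\<forall>\<^sub>F q in at q0 within Q.
        dist (\<integral>s. \<phi> (q0, s) \<partial>\<nu> q) (\<integral>s. \<phi> (q0, s) \<partial>\<nu> q0) < e/3"
      using e unfolding tendsto_iff by (meson divide_pos_pos zero_less_numeral)
    show "\<forall>\<^sub>F q in at q0 within Q. dist (\<integral>s. \<phi> (q, s) \<partial>\<nu> q) (\<integral>s. \<phi> (q0, s) \<partial>\<nu> q0) < e"
      using near close
    proof eventually_elim
      case (elim q)
      then have q: "q \<in> X0" "q \<in> Q" by auto
      have int: "integrable (\<nu> q) (\<lambda>s. \<phi> (q, s))" "integrable (\<nu> q) (\<lambda>s. \<phi> (q0, s))"
        using borel_prob_on_integrable_continuous[OF K \<nu>[OF q(2)]] \<phi>_slice q0 q by auto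
      have "\<bar>\<integral>s. \<phi> (q, s) - \<phi> (q0, s) \<partial>\<nu> q\<bar> \<le> e/3"
        by (rule borel_prob_on_abs_integral_le[OF \<nu>[OF q(2)]])
           (use int X0 q in \<open>auto simp: dist_real_def\<close>)
      then have "\<bar>(\<integral>s. \<phi> (q, s) \<partial>\<nu> q) - (\<integral>s. \<phi> (q0, s) \<partial>\<nu> q)\<bar> \<le> e/3"
        using int by simp
      then show ?case
        using elim unfolding dist_real_def by linarith
    qed
  qed
qed

lemma continuous_on_inner_integral:
  fixes \<phi> :: "'a::t2_space \<times> 'a \<Rightarrow> real"
  assumes "compact K" "borel_prob_on K B" "continuous_on (K \<times> K) \<phi>"
  shows "continuous_on K (\<lambda>s. \<integral>t. \<phi> (s, t) \<partial>B)"
  using continuous_on_integral_parametric[of K K \<phi> "\<lambda>_. B"] assms by auto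

lemma iterated_integral_add:
  fixes \<phi> \<psi> :: "'a::t2_space \<times> 'a \<Rightarrow> real"
  assumes K: "compact K" and A: "borel_prob_on K A" and B: "borel_prob_on K B"
    and \<phi>: "continuous_on (K \<times> K) \<phi>" and \<psi>: "continuous_on (K \<times> K) \<psi>"
  shows "(\<integral>s. (\<integral>t. \<phi> (s, t) + \<psi> (s, t) \<partial>B) \<partial>A)
       = (\<integral>s. (\<integral>t. \<phi> (s, t) \<partial>B) \<partial>A) + (\<integral>s. (\<integral>t. \<psi> (s, t) \<partial>B) \<partial>A)"
proof -
  have "(\<integral>t. \<phi> (s, t) + \<psi> (s, t) \<partial>B) = (\<integral>t. \<phi> (s, t) \<partial>B) + (\<integral>t. \<psi> (s, t) \<partial>B)"
    if "s \<in> space A" for s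
  proof -
    have s: "s \<in> K" using that A by (auto simp: borel_prob_on_def)
    have "continuous_on K (\<lambda>t. \<phi> (s, t))" "continuous_on K (\<lambda>t. \<psi> (s, t))"
      by (rule continuous_on_compose2[OF \<phi>] continuous_on_compose2[OF \<psi>],
          auto intro!: continuous_intros simp: s)+
    then show ?thesis
      using borel_prob_on_integrable_continuous[OF K B] by simp
  qed
  then have "(\<integral>s. (\<integral>t. \<phi> (s, t) + \<psi> (s, t) \<partial>B) \<partial>A)
      = (\<integral>s. (\<integral>t. \<phi> (s, t) \<partial>B) + (\<integral>t. \<psi> (s, t) \<partial>B) \<partial>A)"
    by (rule Bochner_Integration.integral_cong[OF refl])
  also have "\<dots> = (\<integral>s. (\<integral>t. \<phi> (s, t) \<partial>B) \<partial>A) + (\<integral>s. (\<integral>t. \<psi> (s, t) \<partial>B) \<partial>A)"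
    using borel_prob_on_integrable_continuous[OF K A continuous_on_inner_integral[OF K B]] \<phi> \<psi>
    by simp
  finally show ?thesis .
qed

lemma abs_iterated_integral_diff_le:
  fixes \<phi> \<psi> :: "'a::t2_space \<times> 'a \<Rightarrow> real"
  assumes K: "compact K" and A: "borel_prob_on K A" and B: "borel_prob_on K B"
    and \<phi>: "continuous_on (K \<times> K) \<phi>" and \<psi>: "continuous_on (K \<times> K) \<psi>"
    and close: "\<And>p. p \<in> K \<times> K \<Longrightarrow> \<bar>\<phi> p - \<psi> p\<bar> \<le> e"
  shows "\<bar>(\<integral>s. (\<integral>t. \<phi> (s, t) \<partial>B) \<partial>A) - (\<integral>s. (\<integral>t. \<psi> (s, t) \<partial>B) \<partial>A)\<bar> \<le> e"
proof -
  have diff: "continuous_on (K \<times> K) (\<lambda>p. \<phi> p - \<psi> p)"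
    using \<phi> \<psi> by (intro continuous_intros)
  have "(\<integral>s. (\<integral>t. \<phi> (s, t) \<partial>B) \<partial>A)
      = (\<integral>s. (\<integral>t. \<psi> (s, t) \<partial>B) \<partial>A) + (\<integral>s. (\<integral>t. \<phi> (s, t) - \<psi> (s, t) \<partial>B) \<partial>A)"
    using iterated_integral_add[OF K A B \<psi> diff] by simp
  moreover have "\<bar>\<integral>s. (\<integral>t. \<phi> (s, t) - \<psi> (s, t) \<partial>B) \<partial>A\<bar> \<le> e"
  proof (rule borel_prob_on_abs_integral_le[OF A])
    show "integrable A (\<lambda>s. \<integral>t. \<phi> (s, t) - \<psi> (s, t) \<partial>B)"
      using borel_prob_on_integrable_continuous[OF K A continuous_on_inner_integral[OF K B diff]]
      by simp
    fix s assume s: "s \<in> K"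
    have "continuous_on K (\<lambda>t. \<phi> (s, t) - \<psi> (s, t))"
      by (rule continuous_on_compose2[OF diff]) (auto intro!: continuous_intros simp: s)
    then show "\<bar>\<integral>t. \<phi> (s, t) - \<psi> (s, t) \<partial>B\<bar> \<le> e"
      by (intro borel_prob_on_abs_integral_le[OF B] borel_prob_on_integrable_continuous[OF K B])
         (use close s in auto)
  qed
  ultimately show ?thesis by simp
qed

lemma continuous_on_swap_square:
  fixes \<eta> :: "'a::topological_space \<times> 'a \<Rightarrow> 'b::topological_space"
  assumes "continuous_on (K \<times> K) \<eta>"
  shows "continuous_on (K \<times> K) (\<lambda>p. \<eta> (snd p, fst p))"
  by (rule continuous_on_compose2[OF assms]) (auto intro!: continuous_intros)

text \<open>The Borel sets of \<open>K \<times> K\<close> need not be generated by rectangles, so a continuous function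
  on \<open>K \<times> K\<close> need not be measurable for the product measure; Fubini is therefore proved by
  approximating with finite sums of products (Stone--Weierstrass).\<close>

inductive product_sum :: "'a::topological_space set \<Rightarrow> ('a \<times> 'a \<Rightarrow> real) \<Rightarrow> bool" for K where
  product: "continuous_on K h \<Longrightarrow> continuous_on K k \<Longrightarrow> product_sum K (\<lambda>p. h (fst p) * k (snd p))"
| add: "product_sum K \<phi> \<Longrightarrow> product_sum K \<psi> \<Longrightarrow> product_sum K (\<lambda>p. \<phi> p + \<psi> p)"

lemma product_sum_continuous: "product_sum K \<phi> \<Longrightarrow> continuous_on (K \<times> K) \<phi>"
proof (induction rule: product_sum.induct)
  case (product h k)
  have "continuous_on (K \<times> K) (\<lambda>p. h (fst p))" "continuous_on (K \<times> K) (\<lambda>p. k (snd p))"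
    by (rule continuous_on_compose2[OF product(1)] continuous_on_compose2[OF product(2)],
        auto intro: continuous_intros)+
  then show ?case by (intro continuous_intros)
qed (intro continuous_intros)

lemma product_sum_mult:
  assumes "product_sum K \<phi>" "product_sum K \<psi>"
  shows "product_sum K (\<lambda>p. \<phi> p * \<psi> p)"
  using assms
proof (induction arbitrary: \<psi> rule: product_sum.induct)
  case (product h k)
  note hk = product.hyps
  from product(3) show ?case
  proof (induction rule: product_sum.induct)
    case (product h' k')
    have "continuous_on K (\<lambda>x. h x * h' x)" "continuous_on K (\<lambda>x. k x * k' x)"
      using hk product.hyps by (auto intro: continuous_on_mult)
    from product_sum.product[OF this] show ?case
      by (simp add: mult_ac)
  next
    case (add \<phi> \<psi>)
    then show ?case
      using product_sum.add by (simp add: distrib_left)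
  qed
next
  case (add \<phi>1 \<phi>2)
  then show ?case
    using product_sum.add[OF add.IH] by (simp add: distrib_right)
qed

lemma product_sum_integral_swap:
  fixes \<phi> :: "'a::t2_space \<times> 'a \<Rightarrow> real"
  assumes "product_sum K \<phi>" and K: "compact K"
    and A: "borel_prob_on K A" and B: "borel_prob_on K B"
  shows "(\<integral>s. (\<integral>t. \<phi> (s, t) \<partial>B) \<partial>A) = (\<integral>t. (\<integral>s. \<phi> (s, t) \<partial>A) \<partial>B)"
  using assms(1)
proof (induction rule: product_sum.induct)
  case (product h k)
  then show ?case by simp
next
  case (add \<phi> \<psi>)
  note continuous = product_sum_continuous[OF add.hyps(1)] product_sum_continuous[OF add.hyps(2)]
  show ?case
    using iterated_integral_add[OF K A B continuous] add.IH
      iterated_integral_add[OF K B A continuous_on_swap_square[OF continuous(1)]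
        continuous_on_swap_square[OF continuous(2)]]
    by simp
qed

lemma product_sum_approximation:
  fixes \<phi> :: "'a::t2_space \<times> 'a \<Rightarrow> real"
  assumes K: "compact K" and \<phi>: "continuous_on (K \<times> K) \<phi>" and e: "0 < e"
  obtains \<psi> where "product_sum K \<psi>" "\<And>p. p \<in> K \<times> K \<Longrightarrow> \<bar>\<phi> p - \<psi> p\<bar> < e"
proof -
  have "\<exists>\<psi>. product_sum K \<psi> \<and> (\<forall>p\<in>K \<times> K. \<bar>\<phi> p - \<psi> p\<bar> < e)"
  proof (rule Stone_Weierstrass_HOL[OF compact_Times[OF K K] _ product_sum_continuous
           product_sum.add product_sum_mult _ \<phi> e])
    show "product_sum K (\<lambda>x. c)" for c
      using product_sum.product[where h="\<lambda>_. c" and k="\<lambda>_. 1"] by simp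
    show "\<exists>\<psi>. product_sum K \<psi> \<and> \<psi> x \<noteq> \<psi> y" if "x \<in> K \<times> K \<and> y \<in> K \<times> K \<and> x \<noteq> y" for x y
    proof (cases "fst x = fst y")
      case False
      have "fst x \<in> K" "fst y \<in> K" using that by auto
      then obtain h :: "'a \<Rightarrow> real" where h: "continuous_on K h" "h (fst x) \<noteq> h (fst y)"
        using compact_separating_function[OF K _ _ False] by blast
      have "product_sum K (\<lambda>p. h (fst p) * 1)"
        by (intro product_sum.product h(1) continuous_on_const)
      with h(2) show ?thesis by auto
    next
      case True
      then have "snd x \<noteq> snd y" "snd x \<in> K" "snd y \<in> K"
        using that by (auto simp: prod_eq_iff)
      then obtain h :: "'a \<Rightarrow> real" where h: "continuous_on K h" "h (snd x) \<noteq> h (snd y)"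
        using compact_separating_function[OF K] by blast
      have "product_sum K (\<lambda>p. 1 * h (snd p))"
        by (intro product_sum.product h(1) continuous_on_const)
      with h(2) show ?thesis by auto
    qed
  qed auto
  with that show ?thesis by blast
qed

lemma integral_swap_continuous:
  fixes \<phi> :: "'a::t2_space \<times> 'a \<Rightarrow> real"
  assumes K: "compact K" and A: "borel_prob_on K A" and B: "borel_prob_on K B"
    and \<phi>: "continuous_on (K \<times> K) \<phi>"
  shows "(\<integral>s. (\<integral>t. \<phi> (s, t) \<partial>B) \<partial>A) = (\<integral>t. (\<integral>s. \<phi> (s, t) \<partial>A) \<partial>B)"
proof -
  define I1 where "I1 = (\<lambda>\<psi>::'a \<times> 'a \<Rightarrow> real. \<integral>s. (\<integral>t. \<psi> (s, t) \<partial>B) \<partial>A)"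
  define I2 where "I2 = (\<lambda>\<psi>::'a \<times> 'a \<Rightarrow> real. \<integral>t. (\<integral>s. \<psi> (s, t) \<partial>A) \<partial>B)"
  have bound: "\<bar>I1 \<phi> - I2 \<phi>\<bar> \<le> 2 * e" if e: "e > 0" for e
  proof -
    obtain \<psi> where \<psi>: "product_sum K \<psi>" "\<And>p. p \<in> K \<times> K \<Longrightarrow> \<bar>\<phi> p - \<psi> p\<bar> < e"
      using product_sum_approximation[OF K \<phi> e] by blast
    note \<psi>_continuous = product_sum_continuous[OF \<psi>(1)]
    have "\<bar>I1 \<phi> - I1 \<psi>\<bar> \<le> e"
      unfolding I1_def
      by (rule abs_iterated_integral_diff_le[OF K A B \<phi> \<psi>_continuous])
         (use \<psi>(2) in \<open>auto intro: less_imp_le\<close>)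
    moreover have "\<bar>I2 \<phi> - I2 \<psi>\<bar> \<le> e"
      unfolding I2_def
      by (rule abs_iterated_integral_diff_le[OF K B A continuous_on_swap_square[OF \<phi>]
            continuous_on_swap_square[OF \<psi>_continuous], simplified])
         (use \<psi>(2) in \<open>auto intro: less_imp_le\<close>)
    moreover have "I1 \<psi> = I2 \<psi>"
      unfolding I1_def I2_def by (rule product_sum_integral_swap[OF \<psi>(1) K A B])
    ultimately show ?thesis by linarith
  qed
  have "\<bar>I1 \<phi> - I2 \<phi>\<bar> \<le> 0"
  proof (rule field_le_epsilon)
    show "\<bar>I1 \<phi> - I2 \<phi>\<bar> \<le> 0 + e" if "e > 0" for e
      using bound[of "e / 2"] that by simp
  qed
  then show ?thesis by (simp add: I1_def I2_def)
qed

section \<open>Iterated integrals of sums\<close>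

lemma continuous_on_add_lc:
  fixes f g :: "'c::topological_space \<Rightarrow> 'a::{real_vector,t2_space}"
  assumes "lc_hausdorff_tvs TYPE('a)" "continuous_on S f" "continuous_on S g"
  shows "continuous_on S (\<lambda>x. f x + g x)"
proof -
  have "continuous_on UNIV (\<lambda>p::'a \<times> 'a. fst p + snd p)"
    using assms(1) by (simp add: lc_hausdorff_tvs_def)
  from continuous_on_compose2[OF this continuous_on_Pair[OF assms(2,3)]] show ?thesis
    by simp
qed

lemma continuous_on_scaleR_lc:
  fixes f :: "'c::topological_space \<Rightarrow> real" and g :: "'c \<Rightarrow> 'a::{real_vector,t2_space}"
  assumes "lc_hausdorff_tvs TYPE('a)" "continuous_on S f" "continuous_on S g"
  shows "continuous_on S (\<lambda>x. f x *\<^sub>R g x)"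
proof -
  have "continuous_on UNIV (\<lambda>p::real \<times> 'a. fst p *\<^sub>R snd p)"
    using assms(1) by (simp add: lc_hausdorff_tvs_def)
  from continuous_on_compose2[OF this continuous_on_Pair[OF assms(2,3)]] show ?thesis
    by simp
qed

lemma continuous_on_translate_lc:
  fixes g :: "'a::{real_vector,t2_space} \<Rightarrow> real"
  assumes "lc_hausdorff_tvs TYPE('a)" "continuous_on D g" "\<And>z. z \<in> E \<Longrightarrow> z + s \<in> D"
  shows "continuous_on E (\<lambda>z. g (z + s))"
  by (rule continuous_on_compose2[OF assms(2) continuous_on_add_lc[OF assms(1)]])
     (auto intro: continuous_intros assms(3))

fun minkowski_pow :: "nat \<Rightarrow> 'a::real_vector set \<Rightarrow> 'a set" where
  "minkowski_pow 0 K = {0}"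
| "minkowski_pow (Suc k) K = {z + s |z s. z \<in> minkowski_pow k K \<and> s \<in> K}"

lemma minkowski_pow_SucI: "z \<in> minkowski_pow k K \<Longrightarrow> s \<in> K \<Longrightarrow> z + s \<in> minkowski_pow (Suc k) K"
  by auto

lemma convex_minkowski_pow:
  assumes "convex K"
  shows "convex (minkowski_pow k K)"
proof (induction k)
  case (Suc k)
  have "minkowski_pow (Suc k) K = (\<Union>z\<in>minkowski_pow k K. \<Union>s\<in>K. {z + s})"
    by auto
  then show ?case
    using convex_sums[OF Suc assms] by simp
qed simp

lemma minkowski_pow_scaled_point:
  assumes K: "convex K" "K \<noteq> {}" and z: "z \<in> minkowski_pow k K"
  obtains q where "q \<in> K" "z = real k *\<^sub>R q"
  using z
proof (induction k arbitrary: z thesis)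
  case 0
  then show ?case using K by auto
next
  case (Suc k)
  then obtain z' s where zs: "z = z' + s" "z' \<in> minkowski_pow k K" "s \<in> K"
    by auto
  then obtain q where q: "q \<in> K" "z' = real k *\<^sub>R q"
    using Suc.IH by blast
  define r where "r = (real k / (real k + 1)) *\<^sub>R q + (1 / (real k + 1)) *\<^sub>R s"
  have "r \<in> K"
    unfolding r_def by (rule convexD[OF K(1) q(1) zs(3)]) (auto simp: field_simps)
  moreover have "z = real (Suc k) *\<^sub>R r"
    unfolding r_def zs q by (simp add: scaleR_add_right field_simps)
  ultimately show ?case
    using Suc.prems(1) by blast
qed

lemma barycenter_mem_convex:
  assumes K: "convex K" and z: "z \<in> minkowski_pow n K" and y: "y \<in> K"
    and a: "0 \<le> a" and pos: "0 < real n + a"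
  shows "(1 / (real n + a)) *\<^sub>R (z + a *\<^sub>R y) \<in> K"
proof -
  obtain q where q: "q \<in> K" "z = real n *\<^sub>R q"
    using minkowski_pow_scaled_point[OF K _ z] y by blast
  have "(1 / (real n + a)) *\<^sub>R (z + a *\<^sub>R y) = (real n / (real n + a)) *\<^sub>R q + (a / (real n + a)) *\<^sub>R y"
    unfolding q by (simp add: scaleR_add_right)
  also have "\<dots> \<in> K"
  proof (rule convexD[OF K q(1) y])
    show "real n / (real n + a) + a / (real n + a) = 1"
      using pos by (simp add: add_divide_distrib[symmetric])
  qed (use a pos in auto)
  finally show ?thesis .
qed

fun iter_int_list :: "'a::real_vector measure list \<Rightarrow> ('a \<Rightarrow> real) \<Rightarrow> real" where
  "iter_int_list [] g = g 0"
| "iter_int_list (M # Ms) g = (\<integral>s. iter_int_list Ms (\<lambda>z. g (z + s)) \<partial>M)"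

lemma iter_int_eq_iter_int_list: "iter_int k M g = iter_int_list (replicate k M) g"
  by (induction k arbitrary: g) auto

lemma continuous_on_iter_int_list_parametric:
  fixes \<nu>s :: "('b::topological_space \<Rightarrow> 'a::{real_vector,t2_space} measure) list"
  assumes lc: "lc_hausdorff_tvs TYPE('a)" and K: "compact K"
    and \<nu>: "\<And>\<nu> q. \<nu> \<in> set \<nu>s \<Longrightarrow> q \<in> Q \<Longrightarrow> borel_prob_on K (\<nu> q)"
    and \<nu>_continuous: "\<And>\<nu> (h::'a \<Rightarrow> real). \<nu> \<in> set \<nu>s \<Longrightarrow> continuous_on K h
        \<Longrightarrow> continuous_on Q (\<lambda>q. \<integral>s. h s \<partial>\<nu> q)"
    and g: "continuous_on {z + w |z w. z \<in> minkowski_pow (length \<nu>s) K \<and> w \<in> W} g"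
  shows "continuous_on (Q \<times> W) (\<lambda>p. iter_int_list (map (\<lambda>\<nu>. \<nu> (fst p)) \<nu>s) (\<lambda>z. g (z + snd p)))"
  using \<nu> \<nu>_continuous g
proof (induction \<nu>s arbitrary: W)
  case Nil
  then show ?case
    by (auto intro!: continuous_on_compose2[OF Nil.prems(3)] continuous_intros)
next
  case (Cons \<nu> \<nu>s)
  define W' where "W' = {s + w |s w. s \<in> K \<and> w \<in> W}"
  define \<Phi> where "\<Phi> = (\<lambda>p. iter_int_list (map (\<lambda>\<nu>. \<nu> (fst p)) \<nu>s) (\<lambda>z. g (z + snd p)))"
  have "{z + w |z w. z \<in> minkowski_pow (length \<nu>s) K \<and> w \<in> W'}
      \<subseteq> {z + w |z w. z \<in> minkowski_pow (length (\<nu> # \<nu>s)) K \<and> w \<in> W}"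
    unfolding W'_def by auto (metis add.assoc)
  then have \<Phi>_continuous: "continuous_on (Q \<times> W') \<Phi>"
    unfolding \<Phi>_def by (intro Cons.IH) (use Cons.prems continuous_on_subset in auto)
  have shifted: "continuous_on ((Q \<times> W) \<times> K) (\<lambda>x. \<Phi> (fst (fst x), snd x + snd (fst x)))"
  proof (rule continuous_on_compose2[OF \<Phi>_continuous])
    show "continuous_on ((Q \<times> W) \<times> K) (\<lambda>x. (fst (fst x), snd x + snd (fst x)))"
      by (intro continuous_intros continuous_on_add_lc[OF lc])
  qed (fastforce simp: W'_def)
  have "continuous_on (Q \<times> W) (\<lambda>p. \<integral>s. \<Phi> (fst p, s + snd p) \<partial>\<nu> (fst p))"
  proof (rule continuous_on_integral_parametric[OF K shifted, simplified])
    show "borel_prob_on K (\<nu> (fst q))" if "q \<in> Q \<times> W" for q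
      using Cons.prems that by auto
    fix h :: "'a \<Rightarrow> real" assume "continuous_on K h"
    then have "continuous_on Q (\<lambda>q. \<integral>s. h s \<partial>\<nu> q)"
      using Cons.prems by auto
    then show "continuous_on (Q \<times> W) (\<lambda>q. \<integral>s. h s \<partial>\<nu> (fst q))"
      by (rule continuous_on_compose2[of Q _ _ fst]) (auto intro: continuous_intros)
  qed
  then show ?case
    by (simp add: \<Phi>_def add.assoc)
qed

lemma continuous_on_iter_int_list:
  fixes Ms :: "'a::{real_vector,t2_space} measure list"
  assumes lc: "lc_hausdorff_tvs TYPE('a)" and K: "compact K"
    and Ms: "\<And>M. M \<in> set Ms \<Longrightarrow> borel_prob_on K M"
    and g: "continuous_on {z + w |z w. z \<in> minkowski_pow (length Ms) K \<and> w \<in> W} g"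
  shows "continuous_on W (\<lambda>w. iter_int_list Ms (\<lambda>z. g (z + w)))"
proof -
  have "continuous_on (UNIV \<times> W)
      (\<lambda>p. iter_int_list (map (\<lambda>\<nu>. \<nu> (fst p)) (map (\<lambda>M (_::real). M) Ms)) (\<lambda>z. g (z + snd p)))"
    by (rule continuous_on_iter_int_list_parametric[OF lc K]) (use Ms g in auto)
  from continuous_on_compose2[OF this continuous_on_Pair[OF continuous_on_const continuous_on_id]]
  show ?thesis
    by (simp add: comp_def) blast
qed

lemma iter_int_list_swap:
  fixes Ms :: "'a::{real_vector,t2_space} measure list"
  assumes lc: "lc_hausdorff_tvs TYPE('a)" and K: "compact K"
    and prob: "\<And>M. M \<in> set (Ps @ A # B # Ms) \<Longrightarrow> borel_prob_on K M"
    and g: "continuous_on (minkowski_pow (length (Ps @ A # B # Ms)) K) g"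
  shows "iter_int_list (Ps @ A # B # Ms) g = iter_int_list (Ps @ B # A # Ms) g"
  using prob g
proof (induction Ps arbitrary: g)
  case Nil
  define \<psi> where "\<psi> = (\<lambda>w. iter_int_list Ms (\<lambda>z. g (z + w)))"
  have A: "borel_prob_on K A" and B: "borel_prob_on K B"
    using Nil by auto
  have \<psi>_continuous: "continuous_on {t + s |t s. t \<in> K \<and> s \<in> K} \<psi>"
    unfolding \<psi>_def
  proof (rule continuous_on_iter_int_list[OF lc K])
    show "continuous_on {z + w |z w. z \<in> minkowski_pow (length Ms) K \<and> w \<in> {t + s |t s. t \<in> K \<and> s \<in> K}} g"
      by (rule continuous_on_subset[OF Nil(2)]) (auto simp: add.assoc[symmetric]; blast)
  qed (use Nil in auto)
  have "continuous_on (K \<times> K) (\<lambda>p. snd p + fst p)"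
    by (intro continuous_on_add_lc[OF lc] continuous_intros)
  moreover have "(\<lambda>p. snd p + fst p) ` (K \<times> K) \<subseteq> {t + s |t s. t \<in> K \<and> s \<in> K}"
    by force
  ultimately have "continuous_on (K \<times> K) (\<lambda>p. \<psi> (snd p + fst p))"
    by (rule continuous_on_compose2[OF \<psi>_continuous])
  from integral_swap_continuous[OF K A B this]
  show ?case
    by (simp add: \<psi>_def add_ac)
next
  case (Cons P Ps)
  have "iter_int_list (Ps @ A # B # Ms) (\<lambda>z. g (z + s)) = iter_int_list (Ps @ B # A # Ms) (\<lambda>z. g (z + s))"
    if "s \<in> space P" for s
  proof (rule Cons.IH)
    have s: "s \<in> K"
      using that Cons.prems(1)[of P] by (auto simp: borel_prob_on_def)
    have "continuous_on (minkowski_pow (Suc (length (Ps @ A # B # Ms))) K) g"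
      using Cons.prems(2) by (simp del: minkowski_pow.simps)
    then show "continuous_on (minkowski_pow (length (Ps @ A # B # Ms)) K) (\<lambda>z. g (z + s))"
      by (rule continuous_on_translate_lc[OF lc _ minkowski_pow_SucI[OF _ s]])
  qed (use Cons.prems in auto)
  then show ?case
    by (auto intro: Bochner_Integration.integral_cong)
qed

lemma iter_int_list_move_to_front:
  fixes M :: "'a::{real_vector,t2_space} measure"
  assumes lc: "lc_hausdorff_tvs TYPE('a)" and K: "compact K"
    and prob: "\<And>N. N \<in> set (Ps @ Ns1 @ M # Ns2) \<Longrightarrow> borel_prob_on K N"
    and g: "continuous_on (minkowski_pow (length (Ps @ Ns1 @ M # Ns2)) K) g"
  shows "iter_int_list (Ps @ Ns1 @ M # Ns2) g = iter_int_list (Ps @ M # Ns1 @ Ns2) g"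
  using prob g
proof (induction Ns1 arbitrary: Ps)
  case (Cons N Ns1)
  have "iter_int_list (Ps @ (N # Ns1) @ M # Ns2) g = iter_int_list ((Ps @ [N]) @ M # Ns1 @ Ns2) g"
    using Cons.IH[of "Ps @ [N]"] Cons.prems by simp
  also have "\<dots> = iter_int_list (Ps @ M # N # Ns1 @ Ns2) g"
    using iter_int_list_swap[OF lc K, of Ps N M "Ns1 @ Ns2"] Cons.prems by simp
  finally show ?case by simp
qed simp

lemma iter_int_list_perm:
  fixes Ms :: "'a::{real_vector,t2_space} measure list"
  assumes lc: "lc_hausdorff_tvs TYPE('a)" and K: "compact K"
    and perm: "mset Ms = mset Ns"
    and prob: "\<And>M. M \<in> set Ms \<Longrightarrow> borel_prob_on K M"
    and g: "continuous_on (minkowski_pow (length Ms) K) g"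
  shows "iter_int_list Ms g = iter_int_list Ns g"
  using perm prob g
proof (induction Ms arbitrary: Ns g)
  case (Cons M Ms)
  have "M \<in> set Ns"
    using Cons.prems(1) by (metis list.set_intros(1) set_mset_mset)
  then obtain Ns1 Ns2 where Ns: "Ns = Ns1 @ M # Ns2"
    by (meson split_list)
  have "set Ns = set (M # Ms)" "length Ns = length (M # Ms)"
    using Cons.prems(1) by (metis set_mset_mset, metis size_mset)
  then have "iter_int_list Ns g = iter_int_list (M # Ns1 @ Ns2) g"
    using iter_int_list_move_to_front[OF lc K, of "[]" Ns1 M Ns2 g] Cons.prems Ns by auto
  also have "\<dots> = iter_int_list (M # Ms) g"
  proof -
    have "iter_int_list (Ns1 @ Ns2) (\<lambda>z. g (z + s)) = iter_int_list Ms (\<lambda>z. g (z + s))"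
      if "s \<in> space M" for s
    proof (rule Cons.IH[symmetric])
      have "s \<in> K"
        using that Cons.prems(2)[of M] by (auto simp: borel_prob_on_def)
      then show "continuous_on (minkowski_pow (length Ms) K) (\<lambda>z. g (z + s))"
        using Cons.prems(3) by (intro continuous_on_translate_lc[OF lc]) auto
    qed (use Cons.prems Ns in auto)
    then show ?thesis
      by (auto intro: Bochner_Integration.integral_cong)
  qed
  finally show ?case by simp
qed simp

section \<open>Convexity\<close>

lemma convex_on_cong:
  assumes "\<And>x. x \<in> S \<Longrightarrow> f x = g x"
  shows "convex_on S f \<longleftrightarrow> convex_on S g"
  using assms convexD unfolding convex_on_def by (smt (verit))

lemma convex_on_integral:
  fixes F :: "'a::real_vector \<Rightarrow> 'b \<Rightarrow> real"
  assumes V: "convex V" and convex: "\<And>s. s \<in> space M \<Longrightarrow> convex_on V (\<lambda>v. F v s)"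
    and integrable: "\<And>v. v \<in> V \<Longrightarrow> integrable M (F v)"
  shows "convex_on V (\<lambda>v. \<integral>s. F v s \<partial>M)"
proof (rule convex_onI[OF _ V])
  fix t :: real and x y assume t: "0 < t" "t < 1" and xy: "x \<in> V" "y \<in> V"
  have "(\<integral>s. F ((1 - t) *\<^sub>R x + t *\<^sub>R y) s \<partial>M) \<le> (\<integral>s. (1 - t) * F x s + t * F y s \<partial>M)"
  proof (rule integral_mono)
    show "integrable M (F ((1 - t) *\<^sub>R x + t *\<^sub>R y))"
      using convexD[OF V xy] t by (intro integrable) auto
    show "F ((1 - t) *\<^sub>R x + t *\<^sub>R y) s \<le> (1 - t) * F x s + t * F y s" if "s \<in> space M" for s
      using convex_onD[OF convex[OF that]] t xy by simp
  qed (use integrable xy in auto)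
  also have "\<dots> = (1 - t) * (\<integral>s. F x s \<partial>M) + t * (\<integral>s. F y s \<partial>M)"
    using integrable xy by simp
  finally show "(\<integral>s. F ((1 - t) *\<^sub>R x + t *\<^sub>R y) s \<partial>M) \<le> (1 - t) * (\<integral>s. F x s \<partial>M) + t * (\<integral>s. F y s \<partial>M)" .
qed

lemma convex_on_compose_affine:
  assumes f: "convex_on K f" and V: "convex V" and maps: "\<And>v. v \<in> V \<Longrightarrow> b + c *\<^sub>R v \<in> K"
  shows "convex_on V (\<lambda>v. f (b + c *\<^sub>R v))"
proof (rule convex_onI[OF _ V])
  fix t :: real and x y assume t: "0 < t" "t < 1" and xy: "x \<in> V" "y \<in> V"
  have "b + c *\<^sub>R ((1 - t) *\<^sub>R x + t *\<^sub>R y) = (1 - t) *\<^sub>R (b + c *\<^sub>R x) + t *\<^sub>R (b + c *\<^sub>R y)"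
    by (simp add: algebra_simps)
  then show "f (b + c *\<^sub>R ((1 - t) *\<^sub>R x + t *\<^sub>R y)) \<le> (1 - t) * f (b + c *\<^sub>R x) + t * f (b + c *\<^sub>R y)"
    using convex_onD[OF f, of t] maps xy t by simp
qed

lemma convex_on_iter_int_list:
  fixes Ms :: "'a::{real_vector,t2_space} measure list" and g :: "'a \<Rightarrow> real"
  assumes lc: "lc_hausdorff_tvs TYPE('a)" and K: "compact K"
    and prob: "\<And>M. M \<in> set Ms \<Longrightarrow> borel_prob_on K M"
    and V: "convex V" and g: "continuous_on D g"
    and maps: "\<And>z v. z \<in> minkowski_pow (length Ms) K \<Longrightarrow> v \<in> V \<Longrightarrow> z + A v \<in> D"
    and convex: "\<And>z. z \<in> minkowski_pow (length Ms) K \<Longrightarrow> convex_on V (\<lambda>v. g (z + A v))"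
  shows "convex_on V (\<lambda>v. iter_int_list Ms (\<lambda>z. g (z + A v)))"
  using prob g maps convex
proof (induction Ms arbitrary: g D)
  case (Cons M Ms)
  have "convex_on V (\<lambda>v. \<integral>s. iter_int_list Ms (\<lambda>z. g (z + s + A v)) \<partial>M)"
  proof (rule convex_on_integral[OF V])
    fix s assume "s \<in> space M"
    then have s: "s \<in> K"
      using Cons.prems(1)[of M] by (auto simp: borel_prob_on_def)
    have "convex_on V (\<lambda>v. iter_int_list Ms (\<lambda>z. (\<lambda>u. g (u + s)) (z + A v)))"
    proof (rule Cons.IH)
      show "continuous_on {u. u + s \<in> D} (\<lambda>u. g (u + s))"
        by (rule continuous_on_translate_lc[OF lc Cons.prems(2)]) auto
      fix z assume "z \<in> minkowski_pow (length Ms) K"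
      then have z: "z + s \<in> minkowski_pow (length (M # Ms)) K"
        using s by auto
      show "z + A v \<in> {u. u + s \<in> D}" if "v \<in> V" for v
        using Cons.prems(3)[OF z that] by (simp add: add_ac)
      show "convex_on V (\<lambda>v. g (z + A v + s))"
        using Cons.prems(4)[OF z] by (simp add: add_ac)
    qed (use Cons.prems in auto)
    then show "convex_on V (\<lambda>v. iter_int_list Ms (\<lambda>z. g (z + s + A v)))"
      by (simp add: add_ac)
  next
    fix v assume v: "v \<in> V"
    have "continuous_on K (\<lambda>s. iter_int_list Ms (\<lambda>z. (\<lambda>u. g (u + A v)) (z + s)))"
    proof (rule continuous_on_iter_int_list[OF lc K])
      show "continuous_on {z + w |z w. z \<in> minkowski_pow (length Ms) K \<and> w \<in> K} (\<lambda>u. g (u + A v))"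
        by (rule continuous_on_translate_lc[OF lc Cons.prems(2)]) (use Cons.prems(3) v in auto)
    qed (use Cons.prems in auto)
    then show "integrable M (\<lambda>s. iter_int_list Ms (\<lambda>z. g (z + s + A v)))"
      using borel_prob_on_integrable_continuous[OF K Cons.prems(1)[of M]] by (simp add: add_ac)
  qed
  then show ?case
    by simp
qed simp

lemma discrete_convex_increments_mono:
  fixes h :: "nat \<Rightarrow> real"
  assumes midpoint: "\<And>k. 1 \<le> k \<Longrightarrow> k < n \<Longrightarrow> 2 * h k \<le> h (k - 1) + h (k + 1)"
    and "i \<le> j" "j < n"
  shows "h (Suc i) - h i \<le> h (Suc j) - h j"
  using assms(2,3)
proof (induction j)
  case (Suc j)
  show ?case
  proof (cases "i = Suc j")
    case False
    then have "h (Suc i) - h i \<le> h (Suc j) - h j"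
      using Suc by auto
    moreover have "2 * h (Suc j) \<le> h j + h (Suc (Suc j))"
      using midpoint[of "Suc j"] Suc.prems by auto
    ultimately show ?thesis by simp
  qed simp
qed simp

lemma discrete_convex_chord:
  fixes h :: "nat \<Rightarrow> real"
  assumes midpoint: "\<And>k. 1 \<le> k \<Longrightarrow> k < n \<Longrightarrow> 2 * h k \<le> h (k - 1) + h (k + 1)"
    and "k \<le> n"
  shows "real n * h k \<le> real (n - k) * h 0 + real k * h n"
proof (cases "k = 0 \<or> k = n")
  case True
  then show ?thesis by (auto simp: of_nat_diff)
next
  case False
  then have k: "0 < k" "k < n"
    using assms(2) by auto
  define d where "d = (\<lambda>i. h (Suc i) - h i)"
  define D where "D = d (k - 1)"
  have mono: "d i \<le> d j" if "i \<le> j" "j < n" for i j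
    unfolding d_def using discrete_convex_increments_mono[OF midpoint that] .
  have "h k - h 0 = (\<Sum>i<k. d i)"
    unfolding d_def by (rule sum_lessThan_telescope[symmetric])
  also have "\<dots> \<le> (\<Sum>i<k. D)"
    by (rule sum_mono) (use k in \<open>auto simp: D_def intro!: mono\<close>)
  finally have left: "h k - h 0 \<le> real k * D"
    by simp
  have "real (n - k) * D = (\<Sum>i=k..<n. D)"
    by simp
  also have "\<dots> \<le> (\<Sum>i=k..<n. d i)"
    by (rule sum_mono) (use k in \<open>auto simp: D_def intro!: mono\<close>)
  also have "\<dots> = h n - h k"
    unfolding d_def using k by (intro sum_Suc_diff') simp
  finally have right: "real (n - k) * D \<le> h n - h k" .
  have "real (n - k) * (h k - h 0) \<le> real k * (h n - h k)"
    using mult_left_mono[OF left, of "real (n - k)"] mult_left_mono[OF right, of "real k"]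
    by (simp add: mult_ac)
  then show ?thesis
    using k by (simp add: of_nat_diff algebra_simps)
qed

locale symmetric_separately_convex =
  fixes K :: "'a::real_vector set" and n :: nat and H :: "'a list \<Rightarrow> real"
  assumes convex_K: "convex K"
    and symmetric: "\<And>ps qs. mset ps = mset qs \<Longrightarrow> set ps \<subseteq> K \<Longrightarrow> length ps = n \<Longrightarrow> H ps = H qs"
    and convex_head: "\<And>rest. set rest \<subseteq> K \<Longrightarrow> length rest + 1 = n \<Longrightarrow> convex_on K (\<lambda>p. H (p # rest))"
    and midpoint: "\<And>x y rest. x \<in> K \<Longrightarrow> y \<in> K \<Longrightarrow> set rest \<subseteq> K \<Longrightarrow> length rest + 2 = n \<Longrightarrow>
        2 * H (x # y # rest) \<le> H (x # x # rest) + H (y # y # rest)"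
begin

lemma mixed_midpoint:
  assumes x: "x \<in> K" and y: "y \<in> K" and k: "1 \<le> k" "k < n"
  shows "2 * H (replicate k y @ replicate (n - k) x)
    \<le> H (replicate (k - 1) y @ replicate (n - (k - 1)) x) + H (replicate (k + 1) y @ replicate (n - (k + 1)) x)"
proof -
  define i j where "i = k - 1" and "j = n - k - 1"
  then have ij: "k = Suc i" "n - k = Suc j"
    using k by auto
  define rest where "rest = replicate i y @ replicate j x"
  have rest: "set rest \<subseteq> K" "length rest + 2 = n"
    using x y k ij by (auto simp: rest_def)
  have "H (x # y # rest) = H (replicate k y @ replicate (n - k) x)"
    by (rule symmetric) (use rest x y in \<open>auto simp: ij rest_def add_mset_commute\<close>)
  moreover have "H (x # x # rest) = H (replicate (k - 1) y @ replicate (n - (k - 1)) x)"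
    using ij by (intro symmetric) (use rest x y in \<open>auto simp: rest_def Suc_diff_Suc\<close>)
  moreover have "H (y # y # rest) = H (replicate (k + 1) y @ replicate (n - (k + 1)) x)"
    using ij by (intro symmetric) (use rest x y in \<open>auto simp: rest_def\<close>)
  ultimately show ?thesis
    using midpoint[OF x y rest] by simp
qed

lemma mixed_bound:
  assumes x: "x \<in> K" and y: "y \<in> K" and t: "0 \<le> t" "t \<le> 1" and ij: "i + j \<le> n"
  defines "p \<equiv> (1 - t) *\<^sub>R x + t *\<^sub>R y"
  shows "real n * H (replicate i p @ replicate j y @ replicate (n - i - j) x)
    \<le> (real n - (real j + t * real i)) * H (replicate n x) + (real j + t * real i) * H (replicate n y)"
  using ij
proof (induction i arbitrary: j)
  case 0
  have "real n * H (replicate j y @ replicate (n - j) x)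
      \<le> real (n - j) * H (replicate 0 y @ replicate (n - 0) x) + real j * H (replicate n y @ replicate (n - n) x)"
    by (rule discrete_convex_chord[where h = "\<lambda>k. H (replicate k y @ replicate (n - k) x)"])
       (use mixed_midpoint[OF x y] 0 in auto)
  then show ?case
    using 0 by (simp add: of_nat_diff)
next
  case (Suc i)
  let ?c = "\<lambda>j. real j + t * real i"
  let ?bound = "\<lambda>j. (real n - ?c j) * H (replicate n x) + ?c j * H (replicate n y)"
  define rest where "rest = replicate i p @ replicate j y @ replicate (n - Suc i - j) x"
  have p: "p \<in> K"
    unfolding p_def using convexD[OF convex_K x y, of "1 - t" t] t by simp
  have rest: "set rest \<subseteq> K" "length rest + 1 = n"
    using x y p Suc.prems by (auto simp: rest_def)
  have "n - i - j = Suc (n - Suc i - j)"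
    using Suc.prems by simp
  then have hx: "H (x # rest) = H (replicate i p @ replicate j y @ replicate (n - i - j) x)"
    by (intro symmetric) (use rest x in \<open>auto simp: rest_def\<close>)
  have hy: "H (y # rest) = H (replicate i p @ replicate (Suc j) y @ replicate (n - i - Suc j) x)"
    by (intro symmetric) (use rest y in \<open>auto simp: rest_def\<close>)
  have "H (p # rest) \<le> (1 - t) * H (x # rest) + t * H (y # rest)"
    using convex_onD[OF convex_head[OF rest], of t x y] x y t by (simp add: p_def)
  from mult_left_mono[OF this, of "real n"]
  have "real n * H (p # rest)
      \<le> (1 - t) * (real n * H (replicate i p @ replicate j y @ replicate (n - i - j) x))
        + t * (real n * H (replicate i p @ replicate (Suc j) y @ replicate (n - i - Suc j) x))"
    by (simp add: hx hy algebra_simps)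
  also have "\<dots> \<le> (1 - t) * ?bound j + t * ?bound (Suc j)"
    using Suc.IH[of j] Suc.IH[of "Suc j"] Suc.prems t
    by (intro add_mono mult_left_mono) auto
  also have "\<dots> = (real n - (real j + t * real (Suc i))) * H (replicate n x)
      + (real j + t * real (Suc i)) * H (replicate n y)"
    by (simp add: algebra_simps)
  finally show ?case
    by (simp add: rest_def)
qed

lemma convex_on_diagonal: "convex_on K (\<lambda>x. H (replicate n x))"
proof (rule convex_onI[OF _ convex_K])
  fix t :: real and x y assume t: "0 < t" "t < 1" and xy: "x \<in> K" "y \<in> K"
  show "H (replicate n ((1 - t) *\<^sub>R x + t *\<^sub>R y)) \<le> (1 - t) * H (replicate n x) + t * H (replicate n y)"
    (is "?lhs \<le> ?rhs")
  proof (cases "n = 0")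
    case True
    then show ?thesis by (simp add: algebra_simps)
  next
    case False
    have "real n * ?lhs \<le> real n * ?rhs"
      using mixed_bound[OF xy, of t n 0] t by (simp add: algebra_simps)
    with False show ?thesis by simp
  qed
qed

end

section \<open>The operators C_n\<close>

locale continuous_kernel =
  fixes K :: "'a::{real_vector,t2_space} set" and mu :: "'a \<Rightarrow> 'a measure"
  assumes lc: "lc_hausdorff_tvs TYPE('a)"
    and convex: "convex K" and compact: "compact K"
    and prob: "\<And>x. x \<in> K \<Longrightarrow> borel_prob_on K (mu x)"
    and continuous_integral: "\<And>h :: 'a \<Rightarrow> real. continuous_on K h \<Longrightarrow> continuous_on K (\<lambda>x. \<integral>s. h s \<partial>mu x)"
begin

definition C_integrand :: "real \<Rightarrow> nat \<Rightarrow> ('a \<Rightarrow> real) \<Rightarrow> 'a \<Rightarrow> 'a \<Rightarrow> real" where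
  "C_integrand a n f x y = iter_int n (mu x) (\<lambda>S. f ((1 / (real n + a)) *\<^sub>R (S + a *\<^sub>R y)))"

lemma C_op_eq_integral: "C_op mu mus a n f x = (\<integral>y. C_integrand a n f x y \<partial>mus n)"
  by (simp add: C_op_def C_integrand_def)

lemma continuous_on_barycenter_comp:
  assumes a: "0 \<le> a" "0 < real n + a" and f: "continuous_on K f"
  shows "continuous_on {z + w |z w. z \<in> minkowski_pow n K \<and> w \<in> (\<lambda>y. a *\<^sub>R y) ` K}
           (\<lambda>u. f ((1 / (real n + a)) *\<^sub>R u))"
proof (rule continuous_on_compose2[OF f continuous_on_scaleR_lc[OF lc]])
  show "(\<lambda>u. (1 / (real n + a)) *\<^sub>R u) ` {z + w |z w. z \<in> minkowski_pow n K \<and> w \<in> (\<lambda>y. a *\<^sub>R y) ` K} \<subseteq> K"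
    using barycenter_mem_convex[OF convex _ _ a] by auto
qed (simp_all add: continuous_on_id)

lemma continuous_on_C_integrand:
  assumes a: "0 \<le> a" "0 < real n + a" and f: "continuous_on K f"
  shows "continuous_on (K \<times> K) (\<lambda>p. C_integrand a n f (fst p) (snd p))"
proof -
  define \<Phi> where "\<Phi> = (\<lambda>p. iter_int_list (map (\<lambda>\<nu>. \<nu> (fst p)) (replicate n mu))
    (\<lambda>z. f ((1 / (real n + a)) *\<^sub>R (z + snd p))))"
  have "continuous_on (K \<times> (\<lambda>y. a *\<^sub>R y) ` K) \<Phi>"
    unfolding \<Phi>_def
    by (rule continuous_on_iter_int_list_parametric[OF lc compact])
       (use prob continuous_on_barycenter_comp[OF a f] in \<open>auto intro: continuous_integral\<close>)
  moreover have "continuous_on (K \<times> K) (\<lambda>p. (fst p, a *\<^sub>R snd p))"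
    by (intro continuous_intros continuous_on_scaleR_lc[OF lc])
  moreover have "(\<lambda>p. (fst p, a *\<^sub>R snd p)) ` (K \<times> K) \<subseteq> K \<times> (\<lambda>y. a *\<^sub>R y) ` K"
    by auto
  ultimately have "continuous_on (K \<times> K) (\<lambda>p. \<Phi> (fst p, a *\<^sub>R snd p))"
    by (rule continuous_on_compose2)
  then show ?thesis
    by (simp add: \<Phi>_def C_integrand_def iter_int_eq_iter_int_list map_replicate)
qed

lemma continuous_on_C_op:
  assumes mus: "borel_prob_on K (mus n)" and a: "0 \<le> a" "0 < real n + a" and f: "continuous_on K f"
  shows "continuous_on K (C_op mu mus a n f)"
  using continuous_on_integral_parametric[OF compact continuous_on_C_integrand[OF a f], of "\<lambda>_. mus n"] mus
  by (simp add: C_op_eq_integral[abs_def])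

end

locale convexity_preserving_kernel = continuous_kernel +
  assumes convex_integral:
      "\<And>h :: 'a \<Rightarrow> real. continuous_on K h \<Longrightarrow> convex_on K h \<Longrightarrow> convex_on K (\<lambda>x. \<integral>s. h s \<partial>mu x)"
    and Delta_nonneg:
      "\<And>h x y. continuous_on K h \<Longrightarrow> convex_on K h \<Longrightarrow> x \<in> K \<Longrightarrow> y \<in> K \<Longrightarrow> 0 \<le> Delta mu h x y"
begin

lemma convex_on_slice:
  assumes "convex_on (minkowski_pow m K) g" "\<And>v. v \<in> K \<Longrightarrow> z + c *\<^sub>R v \<in> minkowski_pow m K"
  shows "convex_on K (\<lambda>v. g (z + c *\<^sub>R v))"
  using convex_on_compose_affine[OF assms(1) convex assms(2)] .

lemma convex_on_iter_int_list_head: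
  assumes rest: "set rest \<subseteq> K"
    and g: "continuous_on (minkowski_pow (Suc (length rest)) K) g"
      "convex_on (minkowski_pow (Suc (length rest)) K) g"
  shows "convex_on K (\<lambda>p. iter_int_list (map mu (p # rest)) g)"
proof -
  define \<psi> where "\<psi> = (\<lambda>s. iter_int_list (map mu rest) (\<lambda>z. g (z + s)))"
  have prob_rest: "\<And>M. M \<in> set (map mu rest) \<Longrightarrow> borel_prob_on K M"
    using rest prob by auto
  have "continuous_on K \<psi>"
    unfolding \<psi>_def
    by (rule continuous_on_iter_int_list[OF lc compact prob_rest continuous_on_subset[OF g(1)]]) auto
  moreover have "convex_on K (\<lambda>v. iter_int_list (map mu rest) (\<lambda>z. g (z + 1 *\<^sub>R v)))"
    by (rule convex_on_iter_int_list[OF lc compact prob_rest convex g(1)])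
       (auto intro!: convex_on_slice[OF g(2), where c = 1, simplified])
  ultimately have "convex_on K (\<lambda>x. \<integral>s. \<psi> s \<partial>mu x)"
    by (intro convex_integral) (simp_all add: \<psi>_def)
  then show ?thesis
    by (simp add: \<psi>_def)
qed

lemma iter_int_list_midpoint_le:
  assumes x: "x \<in> K" and y: "y \<in> K" and rest: "set rest \<subseteq> K"
    and g: "continuous_on (minkowski_pow (Suc (Suc (length rest))) K) g"
      "convex_on (minkowski_pow (Suc (Suc (length rest))) K) g"
  shows "2 * iter_int_list (map mu (x # y # rest)) g
    \<le> iter_int_list (map mu (x # x # rest)) g + iter_int_list (map mu (y # y # rest)) g"
proof -
  define \<psi> where "\<psi> = (\<lambda>w. iter_int_list (map mu rest) (\<lambda>z. g (z + w)))"
  define F where "F = (\<lambda>v. \<psi> (2 *\<^sub>R v))"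
  have prob_rest: "\<And>M. M \<in> set (map mu rest) \<Longrightarrow> borel_prob_on K M"
    using rest prob by auto
  have sum2: "z + (s + t) \<in> minkowski_pow (Suc (Suc (length rest))) K"
    if "z \<in> minkowski_pow (length rest) K" "s \<in> K" "t \<in> K" for z s t
    using minkowski_pow_SucI[OF minkowski_pow_SucI[OF that(1,2)] that(3)] by (simp add: add.assoc)
  have \<psi>_continuous: "continuous_on {s + t |s t. s \<in> K \<and> t \<in> K} \<psi>"
    unfolding \<psi>_def
    by (rule continuous_on_iter_int_list[OF lc compact prob_rest continuous_on_subset[OF g(1)]])
       (auto simp del: minkowski_pow.simps intro: sum2)
  have "continuous_on K (\<lambda>v. 2 *\<^sub>R v)"
    by (intro continuous_on_scaleR_lc[OF lc] continuous_intros)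
  moreover have "(\<lambda>v. 2 *\<^sub>R v) ` K \<subseteq> {s + t |s t. s \<in> K \<and> t \<in> K}"
    by (force simp: scaleR_2)
  ultimately have "continuous_on K F"
    unfolding F_def by (rule continuous_on_compose2[OF \<psi>_continuous])
  moreover have "convex_on K F"
    unfolding F_def \<psi>_def
  proof (rule convex_on_iter_int_list[OF lc compact prob_rest convex g(1)])
    fix z assume z: "z \<in> minkowski_pow (length (map mu rest)) K"
    show maps: "z + 2 *\<^sub>R v \<in> minkowski_pow (Suc (Suc (length rest))) K" if "v \<in> K" for v
      using sum2[of z v v] z that by (simp add: scaleR_2)
    show "convex_on K (\<lambda>v. g (z + 2 *\<^sub>R v))"
      by (rule convex_on_slice[OF g(2) maps])
  qed
  ultimately have "0 \<le> Delta mu F x y"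
    using Delta_nonneg x y by blast
  moreover have "mid_int (mu p) (mu q) F = iter_int_list (map mu (q # p # rest)) g" for p q
    by (simp add: mid_int_def F_def \<psi>_def add.assoc)
  moreover have "iter_int_list (map mu (y # x # rest)) g = iter_int_list (map mu (x # y # rest)) g"
    by (rule iter_int_list_perm[OF lc compact]) (use x y rest prob g(1) in auto)
  ultimately show ?thesis
    by (simp add: Delta_def)
qed

lemma convex_on_iter_int:
  assumes g: "continuous_on (minkowski_pow n K) g" "convex_on (minkowski_pow n K) g"
  shows "convex_on K (\<lambda>x. iter_int n (mu x) g)"
proof -
  interpret symmetric_separately_convex K n "\<lambda>ps. iter_int_list (map mu ps) g"
  proof
    show "iter_int_list (map mu ps) g = iter_int_list (map mu qs) g"
      if "mset ps = mset qs" "set ps \<subseteq> K" "length ps = n" for ps qs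
      by (rule iter_int_list_perm[OF lc compact]) (use that prob g(1) in \<open>auto simp: mset_map\<close>)
    show "convex_on K (\<lambda>p. iter_int_list (map mu (p # rest)) g)"
      if "set rest \<subseteq> K" "length rest + 1 = n" for rest
      by (rule convex_on_iter_int_list_head) (use that g in auto)
    show "2 * iter_int_list (map mu (x # y # rest)) g
        \<le> iter_int_list (map mu (x # x # rest)) g + iter_int_list (map mu (y # y # rest)) g"
      if "x \<in> K" "y \<in> K" "set rest \<subseteq> K" "length rest + 2 = n" for x y rest
      by (rule iter_int_list_midpoint_le) (use that g in auto)
  qed (rule convex)
  show ?thesis
    using convex_on_diagonal by (simp add: iter_int_eq_iter_int_list map_replicate)
qed

lemma convex_on_C_integrand:
  assumes a: "0 \<le> a" "0 < real n + a" and f: "continuous_on K f" "convex_on K f" and y: "y \<in> K"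
  shows "convex_on K (\<lambda>x. C_integrand a n f x y)"
proof -
  define c where "c = 1 / (real n + a)"
  define b where "b = c *\<^sub>R (a *\<^sub>R y)"
  have maps: "b + c *\<^sub>R z \<in> K" if "z \<in> minkowski_pow n K" for z
    using barycenter_mem_convex[OF convex that y a]
    by (simp add: b_def c_def scaleR_add_right add.commute)
  have "continuous_on (minkowski_pow n K) (\<lambda>z. f (b + c *\<^sub>R z))"
    by (rule continuous_on_compose2[OF f(1)])
       (auto intro!: continuous_intros continuous_on_add_lc[OF lc] continuous_on_scaleR_lc[OF lc] maps)
  moreover have "convex_on (minkowski_pow n K) (\<lambda>z. f (b + c *\<^sub>R z))"
    by (rule convex_on_compose_affine[OF f(2) convex_minkowski_pow[OF convex] maps])
  ultimately show ?thesis
    using convex_on_iter_int by (simp add: C_integrand_def b_def c_def scaleR_add_right add.commute)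
qed

lemma convex_on_C_op:
  assumes mus: "borel_prob_on K (mus n)" and a: "0 \<le> a" "0 < real n + a"
    and f: "continuous_on K f" "convex_on K f"
  shows "convex_on K (C_op mu mus a n f)"
proof -
  have "convex_on K (\<lambda>x. \<integral>y. C_integrand a n f x y \<partial>mus n)"
  proof (rule convex_on_integral[OF convex])
    show "convex_on K (\<lambda>x. C_integrand a n f x y)" if "y \<in> space (mus n)" for y
      using that mus convex_on_C_integrand[OF a f] by (simp add: borel_prob_on_def)
    show "integrable (mus n) (C_integrand a n f x)" if "x \<in> K" for x
    proof (rule borel_prob_on_integrable_continuous[OF compact mus])
      show "continuous_on K (C_integrand a n f x)"
        by (rule continuous_on_compose2[OF continuous_on_C_integrand[OF a f(1)], of _ "Pair x", simplified])
           (auto intro: continuous_intros that)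
    qed
  qed
  then show ?thesis
    by (simp add: C_op_eq_integral[abs_def])
qed

end

theorem theorem5p4:
  fixes K :: "'a::{real_vector,t2_space} set"
    and T :: "('a \<Rightarrow> real) \<Rightarrow> ('a \<Rightarrow> real)"
    and mu :: "'a \<Rightarrow> 'a measure"
    and mus :: "nat \<Rightarrow> 'a measure"
    and a :: real
  assumes lc: "lc_hausdorff_tvs TYPE('a)"
    and K: "convex K" "compact K"
    and T: "markov_op K T"
    and mu: "\<And>x. x \<in> K \<Longrightarrow> borel_prob_on K (mu x)"
    and mu_rep: "\<And>f x. continuous_on K f \<Longrightarrow> x \<in> K \<Longrightarrow> (\<integral>s. f s \<partial>(mu x)) = T f x"
    and T_aff: "\<And>h x. h \<in> A_K K \<Longrightarrow> x \<in> K \<Longrightarrow> T h x = h x"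
    and a: "a \<ge> 0"
    and mus: "\<And>n. n \<ge> 1 \<Longrightarrow> borel_prob_on K (mus n)"
    and c1: "\<And>f. continuous_on K f \<Longrightarrow> convex_on K f \<Longrightarrow> convex_on K (T f)"
    and c2: "\<And>f x y. continuous_on K f \<Longrightarrow> convex_on K f \<Longrightarrow> x \<in> K \<Longrightarrow> y \<in> K
               \<Longrightarrow> Delta mu f x y \<ge> 0"
  shows "\<forall>n\<ge>1. \<forall>f. continuous_on K f \<and> convex_on K f \<longrightarrow>
           convex_on K (C_op mu mus a n f) \<and> continuous_on K (C_op mu mus a n f)"
proof -
  have T_eq: "T h x = (\<integral>s. h s \<partial>mu x)" if "continuous_on K h" "x \<in> K" for h x
    using mu_rep[OF that] by simp
  interpret convexity_preserving_kernel K mu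
  proof
    fix h :: "'a \<Rightarrow> real" assume h: "continuous_on K h"
    have "continuous_on K (T h)"
      using T h by (simp add: markov_op_def)
    then show "continuous_on K (\<lambda>x. \<integral>s. h s \<partial>mu x)"
      by (rule continuous_on_eq) (simp add: T_eq h)
    assume "convex_on K h"
    with c1[OF h] show "convex_on K (\<lambda>x. \<integral>s. h s \<partial>mu x)"
      using convex_on_cong[of K "T h"] T_eq[OF h] by simp
  qed (use lc K mu c2 in auto)
  show ?thesis
  proof (intro allI impI)
    fix n :: nat and f :: "'a \<Rightarrow> real"
    assume "1 \<le> n" and f: "continuous_on K f \<and> convex_on K f"
    then have "borel_prob_on K (mus n)" "0 < real n + a"
      using mus a by auto
    with a f show "convex_on K (C_op mu mus a n f) \<and> continuous_on K (C_op mu mus a n f)"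
      using convex_on_C_op continuous_on_C_op by blast
  qed
qed

end
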